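(* Let $\Sigma=(\mathcal{U},\mathcal{S})$ be a set system whose sets cover $\mathcal{U}$. The set-cover solution $\mathcal{C}$ (with its assignment and levels) returned by the procedure Greedy described below is stable. Greedy: initialize $I\gets\mathcal{U}$ and all levels $\mathcal{L}_j\gets\varnothing$; while $I\neq\varnothing$, pick $S^{*}\in\arg\max_{S\in\mathcal{S}}|I\cap S|$ (ties broken arbitrarily), set $\mathtt{cov}(S^{*})\gets I\cap S^{*}$ (i.e., assign every element of $I\cap S^*$ to $S^*$), add $S^{*}$ to the level $\mathcal{L}_j$ with $2^{j}\leq|\mathtt{cov}(S^{*})|<2^{j+1}$, and set $I\gets I\setminus\mathtt{cov}(S^{*})$; return $\mathcal{C}=\bigcup_{j\geq0}\mathcal{L}_j$.
   Context: A set system $\Sigma=(\mathcal{U},\mathcal{S})$ consists of a finite universe $\mathcal{U}$ and a finite collection $\mathcal{S}$ of subsets of $\mathcal{U}$; a set-cover solution is a subcollection $\mathcal{C}\subseteq\mathcal{S}$ with $\bigcup_{S\in\mathcal{C}}S=\mathcal{U}$. For a set-cover solution $\mathcal{C}$, an assignment is a map $\phi:\mathcal{U}\to\mathcal{C}$ with $u\in\phi(u)$ for every $u$. For $S\in\mathcal{C}$, its cover set is $\mathtt{cov}(S)=\{u\in\mathcal{U}:\phi(u)=S\}$. The sets of $\mathcal{C}$ are organized into levels $\mathcal{L}_j$, $j\in\{0,1,2,\dots\}$, each set of $\mathcal{C}$ lying in exactly one level, and $A_j=\{u\in\mathcal{U}:\phi(u)\in\mathcal{L}_j\}$. The solution is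 stable if (1) for each $j$ and each $S\in\mathcal{L}_j$, $2^{j}\leq|\mathtt{cov}(S)|<2^{j+1}$; and (2) for each level $\mathcal{L}_j$, there is no $S\in\mathcal{S}$ with $|S\cap A_j|\geq 2^{j+1}$. *)

theory Defs
  imports Main
begin

definition set_system :: "'a set \<Rightarrow> 'a set set \<Rightarrow> bool" where
  "set_system U Ss \<longleftrightarrow> finite U \<and> finite Ss \<and> (\<forall>S\<in>Ss. S \<subseteq> U)"

definition cov :: "'a set \<Rightarrow> ('a \<Rightarrow> 'a set) \<Rightarrow> 'a set \<Rightarrow> 'a set" where
  "cov U phi S = {u \<in> U. phi u = S}"

definition lvl_elems :: "'a set \<Rightarrow> ('a \<Rightarrow> 'a set) \<Rightarrow> ('a set \<Rightarrow> nat) \<Rightarrow> nat \<Rightarrow> 'a set" where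
  "lvl_elems U phi lev j = {u \<in> U. lev (phi u) = j}"

text \<open>Stable set-cover solution C with assignment phi and level function lev
  (S lies in level L_j iff lev S = j).\<close>
definition stable :: "'a set \<Rightarrow> 'a set set \<Rightarrow> 'a set set \<Rightarrow> ('a \<Rightarrow> 'a set) \<Rightarrow> ('a set \<Rightarrow> nat) \<Rightarrow> bool" where
  "stable U Ss C phi lev \<longleftrightarrow>
     C \<subseteq> Ss \<and> \<Union>C = U \<and>
     (\<forall>u\<in>U. phi u \<in> C \<and> u \<in> phi u) \<and>
     (\<forall>S\<in>C. 2 ^ lev S \<le> card (cov U phi S) \<and> card (cov U phi S) < 2 ^ (lev S + 1)) \<and>
     (\<forall>j. \<not> (\<exists>S\<in>Ss. card (S \<inter> lvl_elems U phi lev j) \<ge> 2 ^ (j + 1)))"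

text \<open>A run of Greedy starting from the uncovered set I, picking the sets of the list
  in order: each pick maximises |I \<inter> S| over Ss (ties arbitrary), and the loop stops
  exactly when I is empty.\<close>
fun greedy_run :: "'a set set \<Rightarrow> 'a set \<Rightarrow> 'a set list \<Rightarrow> bool" where
  "greedy_run Ss I [] \<longleftrightarrow> I = {}"
| "greedy_run Ss I (S # xs) \<longleftrightarrow>
     I \<noteq> {} \<and> S \<in> Ss \<and> (\<forall>T\<in>Ss. card (I \<inter> T) \<le> card (I \<inter> S)) \<and>
     greedy_run Ss (I - S) xs"

text \<open>Greedy's assignment: u is assigned to the pick at which it was first covered,
  i.e. the first set in the pick list containing u (cov(S*) = I \<inter> S*).\<close>
definition greedy_assign :: "'a set list \<Rightarrow> 'a \<Rightarrow> 'a set" where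
  "greedy_assign xs u = hd (filter (\<lambda>S. u \<in> S) xs)"

end

theory Submission
  imports Defs
begin

text \<open>Let \<open>S\<close> be the first pick that is put into level \<open>j\<close>, and \<open>I\<close> the set of elements
  uncovered just before it. Every element of \<open>A\<^sub>j\<close> is covered by \<open>S\<close> or a later pick, so
  \<open>A\<^sub>j \<subseteq> I\<close>. By the greedy choice of \<open>S\<close>, for every \<open>T \<in> \<S>\<close> we get
  \<open>|T \<inter> A\<^sub>j| \<le> |T \<inter> I| \<le> |S \<inter> I| = |cov(S)| < 2\<^sup>j\<^sup>+\<^sup>1\<close>.\<close>

lemma greedy_run_subset: "greedy_run Ss I xs \<Longrightarrow> set xs \<subseteq> Ss"
  by (induction xs arbitrary: I) auto

lemma greedy_run_covers: "greedy_run Ss I xs \<Longrightarrow> I \<subseteq> \<Union>(set xs)"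
  by (induction xs arbitrary: I) auto

lemma greedy_assign_Cons:
  "greedy_assign (S # xs) u = (if u \<in> S then S else greedy_assign xs u)"
  by (simp add: greedy_assign_def)

lemma greedy_assign_mem:
  assumes "u \<in> \<Union>(set xs)"
  shows "greedy_assign xs u \<in> set xs" and "u \<in> greedy_assign xs u"
  using assms by (induction xs) (auto simp: greedy_assign_Cons)

lemma greedy_level_card_le_cov:
  assumes "greedy_run Ss I xs" and "finite I" and "T \<in> Ss"
    and "T \<inter> lvl_elems I (greedy_assign xs) lev j \<noteq> {}"
  shows "\<exists>S\<in>set xs. lev S = j \<and>
           card (T \<inter> lvl_elems I (greedy_assign xs) lev j) \<le> card (cov I (greedy_assign xs) S)"
  using assms unfolding lvl_elems_def cov_def
proof (induction xs arbitrary: I)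
  case Nil
  then show ?case by simp
next
  case (Cons S xs)
  let ?A = "\<lambda>I xs. T \<inter> {u \<in> I. lev (greedy_assign xs u) = j}"
  have run: "greedy_run Ss (I - S) xs"
    and greedy: "card (I \<inter> T) \<le> card (I \<inter> S)"
    using Cons.prems(1,3) by auto
  show ?case
  proof (cases "lev S = j")
    case True
    have "card (?A I (S # xs)) \<le> card (I \<inter> T)"
      using Cons.prems(2) by (intro card_mono) auto
    also note greedy
    also have "card (I \<inter> S) \<le> card {u \<in> I. greedy_assign (S # xs) u = S}"
      using Cons.prems(2) by (intro card_mono) (auto simp: greedy_assign_Cons)
    finally show ?thesis
      using True by auto
  next
    case False
    then have A_eq: "?A I (S # xs) = ?A (I - S) xs"
      by (auto simp: greedy_assign_Cons)
    obtain S' where S': "S' \<in> set xs" "lev S' = j"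
      and le_tail: "card (?A (I - S) xs) \<le> card {u \<in> I - S. greedy_assign xs u = S'}"
      using Cons.IH[OF run _ Cons.prems(3)] Cons.prems(2,4) A_eq by auto
    have "card {u \<in> I - S. greedy_assign xs u = S'}
            \<le> card {u \<in> I. greedy_assign (S # xs) u = S'}"
      using Cons.prems(2) by (intro card_mono) (auto simp: greedy_assign_Cons)
    then show ?thesis
      using A_eq S' le_tail by fastforce
  qed
qed

theorem lemma1:
  fixes U :: "'a set" and Ss :: "'a set set" and xs :: "'a set list"
    and lev :: "'a set \<Rightarrow> nat"
  assumes "set_system U Ss"
    and "\<Union>Ss = U"
    and "greedy_run Ss U xs"
    and "\<forall>S\<in>set xs. 2 ^ lev S \<le> card (cov U (greedy_assign xs) S)
                     \<and> card (cov U (greedy_assign xs) S) < 2 ^ (lev S + 1)"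
  shows "stable U Ss (set xs) (greedy_assign xs) lev"
proof -
  have "finite U"
    using assms(1) by (simp add: set_system_def)
  have picks: "set xs \<subseteq> Ss"
    using assms(3) by (rule greedy_run_subset)
  have covered: "U \<subseteq> \<Union>(set xs)"
    using assms(3) by (rule greedy_run_covers)
  then have union: "\<Union>(set xs) = U"
    using picks assms(2) by blast
  have assign: "\<forall>u\<in>U. greedy_assign xs u \<in> set xs \<and> u \<in> greedy_assign xs u"
    using covered greedy_assign_mem by (meson subsetD)
  have "card (T \<inter> lvl_elems U (greedy_assign xs) lev j) < 2 ^ (j + 1)"
    if T: "T \<in> Ss" for T j
  proof (cases "T \<inter> lvl_elems U (greedy_assign xs) lev j = {}")
    case True
    then show ?thesis by simp
  next
    case False
    then obtain S where "S \<in> set xs" "lev S = j"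
      and le_cov: "card (T \<inter> lvl_elems U (greedy_assign xs) lev j)
                     \<le> card (cov U (greedy_assign xs) S)"
      using greedy_level_card_le_cov[OF assms(3) \<open>finite U\<close> T] by blast
    have "card (cov U (greedy_assign xs) S) < 2 ^ (j + 1)"
      using assms(4) \<open>S \<in> set xs\<close> \<open>lev S = j\<close> by blast
    with le_cov show ?thesis
      by (rule le_less_trans)
  qed
  then have levels:
    "\<forall>j. \<not> (\<exists>T\<in>Ss. card (T \<inter> lvl_elems U (greedy_assign xs) lev j) \<ge> 2 ^ (j + 1))"
    by (meson leD)
  show ?thesis
    unfolding stable_def using picks union assign assms(4) levels by blast
qed

end
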